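(* For any $T\in\mathbb{N}$ and $n,m\in\mathbb{N}_+$ there exist a constant $C(n)$ depending only on $n$, reals $\alpha_1,\dots,\alpha_m$ and $\beta_1,\dots,\beta_m>0$ such that, with $\phi(t;B)=\sum_{k=1}^m\alpha_ke^{-\beta_k(t-B)}$, $$\max_{1\le B\le T}\ \sum_{t=0}^\infty\big|\mathbb{I}\{t=B\}-\phi(t;B)\big|\le\frac{C(n)e^{0.01(n+1)T}}{m^n},$$ where the maximum is over integers $B$.
   Context: $\mathbb{I}\{\cdot\}$ denotes the indicator function. *)

theory Defs
  imports Complex_Main
begin

definition phi :: "nat \<Rightarrow> (nat \<Rightarrow> real) \<Rightarrow> (nat \<Rightarrow> real) \<Rightarrow> nat \<Rightarrow> nat \<Rightarrow> real" where
  "phi m \<alpha> \<beta> B t = (\<Sum>k=1..m. \<alpha> k * exp (- \<beta> k * (real t - real B)))"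

end

theory Submission
  imports Defs
begin

text \<open>For m \<le> T the bound is at least 1, because T^n \<le> (100 n)^n exp(0.01 T), so \<phi> = 0
already works. For m > T the error can be made arbitrarily small: with x_k = exp(-\<beta>_k),
\<phi>(t; B) is a combination of the geometric sequences x_k^u read at u = t + (T - B), so all B
are handled by a single l1-approximation of the indicator of u = T by T + 1 geometric sequences.
That approximation is built by induction on T: dividing each coefficient by its ratio shifts a
combination one step to the right, and the wrong value the shifted combination takes at u = 0
is cancelled by one extra geometric term whose ratio is so small that its l1 cost is negligible.\<close>

definition geom_comb :: "nat \<Rightarrow> (nat \<Rightarrow> real) \<Rightarrow> (nat \<Rightarrow> real) \<Rightarrow> nat \<Rightarrow> real" where
  "geom_comb N c x u = (\<Sum>j<N. c j * x j ^ u)"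

lemma geom_comb_extend:
  "geom_comb (Suc N) (c(N := a)) (x(N := y)) u = geom_comb N c x u + a * y ^ u"
  by (simp add: geom_comb_def)

lemma geom_comb_shift:
  assumes "\<And>j. j < N \<Longrightarrow> x j \<noteq> 0"
  shows "geom_comb N (\<lambda>j. c j / x j) x (Suc u) = geom_comb N c x u"
  unfolding geom_comb_def using assms by (intro sum.cong) auto

lemma geom_comb_zero_extend:
  assumes "M \<le> N"
  shows "geom_comb N (\<lambda>j. if j < M then c j else 0) x u = geom_comb M c x u"
  unfolding geom_comb_def using assms by (intro sum.mono_neutral_cong_right) auto

lemma sums_power_Suc:
  fixes y :: real
  assumes "0 < y" "y < 1"
  shows "(\<lambda>u. y ^ Suc u) sums (y / (1 - y))"
  using sums_mult[OF geometric_sums, of y y] assms by (simp add: divide_simps)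

lemma suminf_ignore_initial_segment_le:
  fixes f :: "nat \<Rightarrow> real"
  assumes "summable f" "\<And>u. 0 \<le> f u"
  shows "summable (\<lambda>u. f (u + d))" "(\<Sum>u. f (u + d)) \<le> suminf f"
proof -
  show "summable (\<lambda>u. f (u + d))"
    using assms(1) by (rule summable_ignore_initial_segment)
  have "0 \<le> (\<Sum>u<d. f u)"
    using assms(2) by (rule sum_nonneg)
  then show "(\<Sum>u. f (u + d)) \<le> suminf f"
    using suminf_minus_initial_segment[OF assms(1), of d] by linarith
qed

lemma geometric_correction_at_zero:
  fixes s h :: "nat \<Rightarrow> real" and e \<delta> :: real
  assumes tail: "summable (\<lambda>u. \<bar>s (Suc u) - h (Suc u)\<bar>)"
    and tail_le: "(\<Sum>u. \<bar>s (Suc u) - h (Suc u)\<bar>) \<le> e"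
    and "0 < \<delta>"
  obtains y where "0 < y" "y < 1"
    "summable (\<lambda>u. \<bar>s u - (h u + (s 0 - h 0) * y ^ u)\<bar>)"
    "(\<Sum>u. \<bar>s u - (h u + (s 0 - h 0) * y ^ u)\<bar>) \<le> e + \<delta>"
proof -
  define K where "K = \<bar>s 0 - h 0\<bar>"
  define y where "y = \<delta> / (\<delta> + K + 1)"
  have K: "0 \<le> K"
    by (simp add: K_def)
  have y: "0 < y" "y < 1"
    using \<open>0 < \<delta>\<close> K by (auto simp: y_def field_simps)
  have "1 - y = (K + 1) / (\<delta> + K + 1)"
    using \<open>0 < \<delta>\<close> K by (simp add: y_def field_simps)
  then have "K * (y / (1 - y)) = K * \<delta> / (K + 1)"
    using \<open>0 < \<delta>\<close> K by (simp add: y_def)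
  also have "\<dots> \<le> \<delta>"
    using \<open>0 < \<delta>\<close> K by (simp add: field_simps)
  finally have geo_le: "K * (y / (1 - y)) \<le> \<delta>" .
  define r where "r u = \<bar>s u - (h u + (s 0 - h 0) * y ^ u)\<bar>" for u
  have geo: "(\<lambda>u. K * y ^ Suc u) sums (K * (y / (1 - y)))"
    using y by (intro sums_mult sums_power_Suc)
  have r_Suc: "r (Suc u) \<le> \<bar>s (Suc u) - h (Suc u)\<bar> + K * y ^ Suc u" for u
  proof -
    have "r (Suc u) = \<bar>(s (Suc u) - h (Suc u)) - (s 0 - h 0) * y ^ Suc u\<bar>"
      by (simp add: r_def algebra_simps)
    also have "\<dots> \<le> \<bar>s (Suc u) - h (Suc u)\<bar> + \<bar>(s 0 - h 0) * y ^ Suc u\<bar>"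
      by (rule abs_triangle_ineq4)
    finally show ?thesis
      using y by (simp add: K_def abs_mult)
  qed
  have majorant: "summable (\<lambda>u. \<bar>s (Suc u) - h (Suc u)\<bar> + K * y ^ Suc u)"
    using tail geo by (intro summable_add) (auto dest: sums_summable)
  have r_Suc_summable: "summable (\<lambda>u. r (Suc u))"
    by (rule summable_comparison_test'[OF majorant]) (use r_Suc in \<open>simp add: r_def\<close>)
  then have "summable r"
    by (rule summable_Suc_iff[THEN iffD1])
  have "suminf r = (\<Sum>u. r (Suc u))"
    using suminf_split_head[OF \<open>summable r\<close>] by (simp add: r_def)
  also have "\<dots> \<le> (\<Sum>u. \<bar>s (Suc u) - h (Suc u)\<bar> + K * y ^ Suc u)"
    using r_Suc r_Suc_summable majorant by (rule suminf_le)
  also have "\<dots> = (\<Sum>u. \<bar>s (Suc u) - h (Suc u)\<bar>) + K * (y / (1 - y))"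
    using suminf_add[OF tail sums_summable[OF geo]] sums_unique[OF geo] by simp
  also have "\<dots> \<le> e + \<delta>"
    using tail_le geo_le by linarith
  finally show ?thesis
    using that y \<open>summable r\<close> unfolding r_def by blast
qed

lemma indicator_approx_by_geom_comb:
  fixes T :: nat and \<epsilon> :: real
  assumes "0 < \<epsilon>"
  shows "\<exists>c x. (\<forall>j. 0 < x j \<and> x j < 1) \<and>
    summable (\<lambda>u. \<bar>(if u = T then 1 else 0) - geom_comb (Suc T) c x u\<bar>) \<and>
    (\<Sum>u. \<bar>(if u = T then 1 else 0) - geom_comb (Suc T) c x u\<bar>) \<le> \<epsilon>"
  using assms
proof (induction T arbitrary: \<epsilon>)
  case 0
  obtain y where y: "0 < y" "y < 1"
    and approx: "summable (\<lambda>u. \<bar>(if u = 0 then 1 else 0) - y ^ u\<bar>)"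
      "(\<Sum>u. \<bar>(if u = 0 then 1 else 0) - y ^ u\<bar>) \<le> \<epsilon>"
    using geometric_correction_at_zero[of "\<lambda>u. if u = 0 then 1 else 0" "\<lambda>_. 0" 0 \<epsilon>] 0 by auto
  have "geom_comb (Suc 0) (\<lambda>_. 1) (\<lambda>_. y) u = y ^ u" for u
    by (simp add: geom_comb_def)
  then show ?case
    using y approx by (intro exI[of _ "\<lambda>_. 1"] exI[of _ "\<lambda>_. y"]) simp
next
  case (Suc T)
  obtain c x where x: "\<forall>j. 0 < x j \<and> x j < 1"
    and approx: "summable (\<lambda>u. \<bar>(if u = T then 1 else 0) - geom_comb (Suc T) c x u\<bar>)"
      "(\<Sum>u. \<bar>(if u = T then 1 else 0) - geom_comb (Suc T) c x u\<bar>) \<le> \<epsilon> / 2"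
    using Suc.IH[of "\<epsilon> / 2"] Suc.prems by auto
  define s :: "nat \<Rightarrow> real" where "s u = (if u = Suc T then 1 else 0)" for u
  define h where "h = geom_comb (Suc T) (\<lambda>j. c j / x j) x"
  have "h (Suc u) = geom_comb (Suc T) c x u" for u
    unfolding h_def by (rule geom_comb_shift) (use x in \<open>metis less_irrefl\<close>)
  then have tail: "(\<lambda>u. \<bar>s (Suc u) - h (Suc u)\<bar>) =
      (\<lambda>u. \<bar>(if u = T then 1 else 0) - geom_comb (Suc T) c x u\<bar>)"
    by (simp add: s_def)
  obtain y where y: "0 < y" "y < 1"
    and approx': "summable (\<lambda>u. \<bar>s u - (h u + (s 0 - h 0) * y ^ u)\<bar>)"
      "(\<Sum>u. \<bar>s u - (h u + (s 0 - h 0) * y ^ u)\<bar>) \<le> \<epsilon> / 2 + \<epsilon> / 2"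
    using geometric_correction_at_zero[of s h "\<epsilon> / 2" "\<epsilon> / 2"] approx Suc.prems
    unfolding tail by auto
  define c' where "c' = (\<lambda>j. c j / x j)(Suc T := s 0 - h 0)"
  define x' where "x' = x(Suc T := y)"
  have "geom_comb (Suc (Suc T)) c' x' u = h u + (s 0 - h 0) * y ^ u" for u
    unfolding c'_def x'_def h_def by (rule geom_comb_extend)
  moreover have "\<forall>j. 0 < x' j \<and> x' j < 1"
    using x y by (simp add: x'_def)
  ultimately show ?case
    using approx' by (intro exI[of _ c'] exI[of _ x']) (simp add: s_def)
qed

lemma phi_eq_geom_comb:
  assumes "\<forall>j. 0 < x j" "B \<le> D"
  shows "phi m (\<lambda>k. c (k - 1) * x (k - 1) ^ D) (\<lambda>k. - ln (x (k - 1))) B t =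
    geom_comb m c x (t + (D - B))"
proof -
  have x: "0 < x j" for j
    using assms(1) by blast
  have "exp (- (- ln (x j)) * (real t - real B)) = x j powr (real t - real B)" for j
    using x[of j] by (simp add: powr_def)
  moreover have "x j ^ D * x j powr (real t - real B) = x j ^ (t + (D - B))" for j
  proof -
    have "real D + (real t - real B) = real (t + (D - B))"
      using assms(2) by (simp add: of_nat_diff)
    then have "x j powr real D * x j powr (real t - real B) = x j powr real (t + (D - B))"
      by (simp only: powr_add[symmetric])
    then show ?thesis
      by (simp only: powr_realpow[OF x[of j]])
  qed
  ultimately show ?thesis
    by (simp add: phi_def geom_comb_def sum.atLeast1_atMost_eq mult.assoc)
qed

lemma power_le_exp:
  fixes x a :: real
  assumes "0 \<le> x" "0 < a"
  shows "x ^ n \<le> (real n / a) ^ n * exp (a * x)"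
proof (cases "n = 0")
  case True
  then show ?thesis
    using assms by simp
next
  case False
  have "0 \<le> a * x"
    using assms by simp
  have "x ^ n = (real n / a) ^ n * (a * x / real n) ^ n"
    using False assms by (simp add: power_mult_distrib[symmetric])
  also have "(a * x / real n) ^ n \<le> (1 + a * x / real n) ^ n"
    using assms by (intro power_mono) auto
  also have "\<dots> \<le> exp (a * x)"
    using False \<open>0 \<le> a * x\<close> by (intro exp_ge_one_plus_x_over_n_power_n) auto
  finally show ?thesis
    using assms by (simp add: mult_left_mono)
qed

lemma delta_approx_by_zero:
  fixes R :: real
  assumes "1 \<le> R"
  shows "\<exists>\<alpha> \<beta> :: nat \<Rightarrow> real. (\<forall>k\<in>{1..m}. \<beta> k > 0) \<and>
    (\<forall>B\<in>{1..T}. summable (\<lambda>t. \<bar>(if t = B then 1 else 0) - phi m \<alpha> \<beta> B t\<bar>) \<and>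
       (\<Sum>t. \<bar>(if t = B then 1 else 0) - phi m \<alpha> \<beta> B t\<bar>) \<le> R)"
proof -
  have "(\<lambda>t. \<bar>(if t = B then 1 else 0) - phi m (\<lambda>_. 0) (\<lambda>_. 1) B t\<bar>) =
      (\<lambda>t. if t = B then 1 else 0)" for B
    by (auto simp: phi_def)
  then have "(\<lambda>t. \<bar>(if t = B then 1 else 0) - phi m (\<lambda>_. 0) (\<lambda>_. 1) B t\<bar>) sums 1" for B
    using sums_single[of B "\<lambda>_. 1 :: real"] by simp
  then show ?thesis
    using assms by (intro exI[of _ "\<lambda>_. 0"] exI[of _ "\<lambda>_. 1"]) (auto simp: sums_iff)
qed

lemma delta_approx_by_exp_sums:
  fixes R :: real
  assumes "T < m" "0 < R"
  shows "\<exists>\<alpha> \<beta> :: nat \<Rightarrow> real. (\<forall>k\<in>{1..m}. \<beta> k > 0) \<and>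
    (\<forall>B\<in>{1..T}. summable (\<lambda>t. \<bar>(if t = B then 1 else 0) - phi m \<alpha> \<beta> B t\<bar>) \<and>
       (\<Sum>t. \<bar>(if t = B then 1 else 0) - phi m \<alpha> \<beta> B t\<bar>) \<le> R)"
proof -
  obtain c x where x: "\<forall>j. 0 < x j \<and> x j < 1"
    and approx: "summable (\<lambda>u. \<bar>(if u = T then 1 else 0) - geom_comb (Suc T) c x u\<bar>)"
      "(\<Sum>u. \<bar>(if u = T then 1 else 0) - geom_comb (Suc T) c x u\<bar>) \<le> R"
    using indicator_approx_by_geom_comb[OF \<open>0 < R\<close>] by blast
  define c' where "c' j = (if j < Suc T then c j else 0)" for j
  define \<alpha> where "\<alpha> k = c' (k - 1) * x (k - 1) ^ T" for k
  define \<beta> where "\<beta> k = - ln (x (k - 1))" for k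
  have "\<beta> k > 0" for k
    using x by (simp add: \<beta>_def)
  moreover have "summable (\<lambda>t. \<bar>(if t = B then 1 else 0) - phi m \<alpha> \<beta> B t\<bar>) \<and>
      (\<Sum>t. \<bar>(if t = B then 1 else 0) - phi m \<alpha> \<beta> B t\<bar>) \<le> R" if "B \<le> T" for B
  proof -
    have "phi m \<alpha> \<beta> B t = geom_comb m c' x (t + (T - B))" for t
      unfolding \<alpha>_def \<beta>_def using x \<open>B \<le> T\<close> by (intro phi_eq_geom_comb) auto
    also have "geom_comb m c' x u = geom_comb (Suc T) c x u" for u
      unfolding c'_def using \<open>T < m\<close> by (intro geom_comb_zero_extend) simp
    finally have "\<bar>(if t = B then 1 else 0) - phi m \<alpha> \<beta> B t\<bar> =
        \<bar>(if t + (T - B) = T then 1 else 0) - geom_comb (Suc T) c x (t + (T - B))\<bar>" for t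
      using \<open>B \<le> T\<close> by auto
    then show ?thesis
      using suminf_ignore_initial_segment_le[OF approx(1), of "T - B"] approx(2) by simp
  qed
  ultimately show ?thesis
    by (intro exI[of _ \<alpha>] exI[of _ \<beta>]) auto
qed

theorem lemmaF2:
  fixes n :: nat
  assumes "n \<ge> 1"
  shows "\<exists>C::real. \<forall>(T::nat) (m::nat). m \<ge> 1 \<longrightarrow>
           (\<exists>\<alpha> \<beta> :: nat \<Rightarrow> real. (\<forall>k\<in>{1..m}. \<beta> k > 0) \<and>
             (\<forall>B\<in>{1..T}.
                summable (\<lambda>t. \<bar>(if t = B then 1 else 0) - phi m \<alpha> \<beta> B t\<bar>) \<and>
                (\<Sum>t. \<bar>(if t = B then 1 else 0) - phi m \<alpha> \<beta> B t\<bar>)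
                  \<le> C * exp (0.01 * real (n + 1) * real T) / real m ^ n))"
proof -
  define C :: real where "C = (real n / 0.01) ^ n"
  have "C > 0"
    using assms by (simp add: C_def)
  have "\<exists>\<alpha> \<beta> :: nat \<Rightarrow> real. (\<forall>k\<in>{1..m}. \<beta> k > 0) \<and>
      (\<forall>B\<in>{1..T}. summable (\<lambda>t. \<bar>(if t = B then 1 else 0) - phi m \<alpha> \<beta> B t\<bar>) \<and>
         (\<Sum>t. \<bar>(if t = B then 1 else 0) - phi m \<alpha> \<beta> B t\<bar>)
           \<le> C * exp (0.01 * real (n + 1) * real T) / real m ^ n)"
    if "m \<ge> 1" for T m :: nat
  proof (cases "T < m")
    case True
    then show ?thesis
      using \<open>C > 0\<close> that by (intro delta_approx_by_exp_sums) auto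
  next
    case False
    have "real m ^ n \<le> real T ^ n"
      using False by (simp add: power_mono)
    also have "\<dots> \<le> C * exp (0.01 * real T)"
      unfolding C_def by (rule power_le_exp) auto
    also have "\<dots> \<le> C * exp (0.01 * real (n + 1) * real T)"
      using \<open>C > 0\<close> mult_right_mono[of "0.01" "0.01 * real (n + 1)" "real T"] by simp
    finally show ?thesis
      using that by (intro delta_approx_by_zero) simp
  qed
  then show ?thesis
    by blast
qed

end
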